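(* Let $p$ be a prime, $\alpha\in[0,1]$ and $e\ge1$ an integer. The following are equivalent: (1) $\lfloor (p^e-1)\alpha\rfloor=p^e\langle\alpha\rangle_e$; (2) $\alpha\le p^e\langle\alpha\rangle^e$; (3) $\alpha\ge\frac{p^e}{p^e-1}\langle\alpha\rangle_e$.
   Context: For $\alpha\in(0,1]$, the non-terminating base $p$ expansion is the unique expression $\alpha=\sum_{e\ge1}a_e/p^e$ with integers $0\le a_e\le p-1$ not all eventually zero. The $e$-th truncation is $\langle\alpha\rangle_e:=\sum_{i=1}^e a_i/p^i$, and the $e$-th tail is $\langle\alpha\rangle^e:=\alpha-\langle\alpha\rangle_e$. By convention $\langle0\rangle_e=\langle0\rangle^e=0$. *)

theory Defs
  imports "HOL-Analysis.Analysis"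
begin

text \<open>Non-terminating base p digits of alpha in (0,1]: the unique digit sequence
  a_1, a_2, ... with 0 \<le> a_i \<le> p-1, sum a_i/p^i = alpha, not eventually zero.
  Index 0 is normalised to 0 so the sequence is unique.\<close>
definition nt_digits :: "nat \<Rightarrow> real \<Rightarrow> nat \<Rightarrow> nat" where
  "nt_digits p \<alpha> = (THE a. a 0 = 0 \<and> (\<forall>i. a i \<le> p - 1) \<and>
      ((\<lambda>i. real (a (Suc i)) / real p ^ Suc i) sums \<alpha>) \<and>
      \<not> (\<exists>N. \<forall>i\<ge>N. a i = 0))"

definition trunc :: "nat \<Rightarrow> real \<Rightarrow> nat \<Rightarrow> real" where
  "trunc p \<alpha> e = (if \<alpha> = 0 then 0
     else (\<Sum>i=1..e. real (nt_digits p \<alpha> i) / real p ^ i))"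

definition tail :: "nat \<Rightarrow> real \<Rightarrow> nat \<Rightarrow> real" where
  "tail p \<alpha> e = (if \<alpha> = 0 then 0 else \<alpha> - trunc p \<alpha> e)"

end

theory Submission imports Defs begin

text \<open>The tail \<open>\<alpha> - \<langle>\<alpha>\<rangle>\<^sub>e\<close> of a non-terminating expansion lies in \<open>(0, p\<^sup>-\<^sup>e]\<close> and
  \<open>p\<^sup>e \<langle>\<alpha>\<rangle>\<^sub>e\<close> is an integer, so \<open>p\<^sup>e \<langle>\<alpha>\<rangle>\<^sub>e = \<lceil>p\<^sup>e \<alpha>\<rceil> - 1\<close>; this also gives uniqueness of the
  expansion, so \<open>nt_digits\<close> is the genuine digit sequence. Writing
  \<open>(p\<^sup>e - 1) \<alpha> = p\<^sup>e \<langle>\<alpha>\<rangle>\<^sub>e + (p\<^sup>e \<langle>\<alpha>\<rangle>\<^sup>e - \<alpha>)\<close>, the second summand is \<open>< 1\<close>, so the floor equals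
  \<open>p\<^sup>e \<langle>\<alpha>\<rangle>\<^sub>e\<close> exactly when that summand is nonnegative, which is (2); (3) is (2) rearranged.\<close>

definition nt_expansion :: "nat \<Rightarrow> real \<Rightarrow> (nat \<Rightarrow> nat) \<Rightarrow> bool" where
  "nt_expansion p \<alpha> a \<longleftrightarrow> a 0 = 0 \<and> (\<forall>i. a i \<le> p - 1) \<and>
      ((\<lambda>i. real (a (Suc i)) / real p ^ Suc i) sums \<alpha>) \<and>
      \<not> (\<exists>N. \<forall>i\<ge>N. a i = 0)"

definition expansion_trunc :: "nat \<Rightarrow> (nat \<Rightarrow> nat) \<Rightarrow> nat \<Rightarrow> real" where
  "expansion_trunc p a n = (\<Sum>i=1..n. real (a i) / real p ^ i)"

lemma expansion_trunc_Suc: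
  "expansion_trunc p a (Suc n) = expansion_trunc p a n + real (a (Suc n)) / real p ^ Suc n"
  by (simp add: expansion_trunc_def sum.cl_ivl_Suc)

lemma expansion_trunc_eq_partial_sum:
  "expansion_trunc p a n = (\<Sum>i<n. real (a (Suc i)) / real p ^ Suc i)"
  by (induction n) (simp_all add: expansion_trunc_Suc, simp add: expansion_trunc_def)

lemma expansion_trunc_scaled_nat:
  assumes "p > 0"
  shows "\<exists>k::nat. real p ^ n * expansion_trunc p a n = real k"
proof (induction n)
  case 0 then show ?case by (simp add: expansion_trunc_def)
next
  case (Suc n)
  then obtain k where k: "real p ^ n * expansion_trunc p a n = real k" by blast
  have "real p ^ Suc n * expansion_trunc p a (Suc n)
      = real p * (real p ^ n * expansion_trunc p a n) + real (a (Suc n))"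
    using assms by (simp add: expansion_trunc_Suc field_simps)
  also have "\<dots> = real (p * k + a (Suc n))" using k by simp
  finally show ?case by blast
qed

lemma nt_expansion_tail_bounds:
  assumes a: "nt_expansion p \<alpha> a" and p: "p \<ge> 2"
  shows "0 < \<alpha> - expansion_trunc p a n" and "\<alpha> - expansion_trunc p a n \<le> 1 / real p ^ n"
proof -
  define f where "f i = real (a (Suc i)) / real p ^ Suc i" for i
  have "f sums \<alpha>" using a unfolding nt_expansion_def f_def by auto
  then have tail: "(\<lambda>i. f (i + n)) sums (\<alpha> - expansion_trunc p a n)"
    using sums_split_initial_segment[of f \<alpha> n] by (simp add: f_def expansion_trunc_eq_partial_sum)
  have p1: "real p > 1" using p by simp
  define c where "c = (real p - 1) / real p ^ Suc n"
  have geom: "(\<lambda>i. c * (1 / real p) ^ i) sums (1 / real p ^ n)"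
  proof -
    have "(\<lambda>i. c * (1 / real p) ^ i) sums (c * (1 / (1 - 1 / real p)))"
      by (intro sums_mult geometric_sums) (use p1 in auto)
    moreover have "c * (1 / (1 - 1 / real p)) = 1 / real p ^ n"
      using p1 by (simp add: c_def field_simps)
    ultimately show ?thesis by simp
  qed
  have "f (i + n) \<le> c * (1 / real p) ^ i" for i
  proof -
    have "a (Suc (i + n)) \<le> p - 1" using a unfolding nt_expansion_def by blast
    then have "real (a (Suc (i + n))) \<le> real p - 1" using p by linarith
    then have "f (i + n) \<le> (real p - 1) / real p ^ Suc (i + n)"
      unfolding f_def by (rule divide_right_mono) simp
    also have "\<dots> = c * (1 / real p) ^ i"
      using p1 by (simp add: c_def field_simps power_add)
    finally show ?thesis .
  qed
  then show "\<alpha> - expansion_trunc p a n \<le> 1 / real p ^ n"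
    by (rule sums_le[OF _ tail geom])
  obtain j where j: "j \<ge> Suc n" "a j \<noteq> 0" using a unfolding nt_expansion_def by blast
  have "f (j - Suc n + n) > 0" using j p1 unfolding f_def by (simp add: Suc_diff_le)
  then have "0 < suminf (\<lambda>i. f (i + n))"
    by (intro suminf_pos2[where i="j - Suc n"]) (use tail p1 in \<open>auto simp: sums_iff f_def\<close>)
  then show "0 < \<alpha> - expansion_trunc p a n" using tail by (simp add: sums_iff)
qed

lemma nt_expansion_trunc_eq_ceiling:
  assumes a: "nt_expansion p \<alpha> a" and p: "p \<ge> 2"
  shows "real p ^ n * expansion_trunc p a n = of_int (\<lceil>real p ^ n * \<alpha>\<rceil> - 1)"
proof -
  obtain k where k: "real p ^ n * expansion_trunc p a n = real k"
    using expansion_trunc_scaled_nat[of p n a] p by auto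
  have pn: "real p ^ n > 0" using p by simp
  have "real p ^ n * (\<alpha> - expansion_trunc p a n) \<le> 1"
    using mult_left_mono[OF nt_expansion_tail_bounds(2)[OF a p, of n], of "real p ^ n"] pn p
    by simp
  moreover have "0 < real p ^ n * (\<alpha> - expansion_trunc p a n)"
    using nt_expansion_tail_bounds(1)[OF a p, of n] pn by simp
  ultimately have "real k < real p ^ n * \<alpha>" "real p ^ n * \<alpha> \<le> real k + 1"
    using k by (simp_all add: right_diff_distrib)
  then have "\<lceil>real p ^ n * \<alpha>\<rceil> = int k + 1" by (simp add: ceiling_eq_iff)
  then show ?thesis using k by simp
qed

lemma nt_expansion_unique:
  assumes a: "nt_expansion p \<alpha> a" and b: "nt_expansion p \<alpha> b" and p: "p \<ge> 2"
  shows "a = b"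
proof
  have trunc_eq: "expansion_trunc p a n = expansion_trunc p b n" for n
  proof -
    have "real p ^ n * expansion_trunc p a n = real p ^ n * expansion_trunc p b n"
      using nt_expansion_trunc_eq_ceiling[OF a p, of n] nt_expansion_trunc_eq_ceiling[OF b p, of n]
      by simp
    moreover have "real p ^ n > 0" using p by simp
    ultimately show ?thesis by auto
  qed
  fix n show "a n = b n"
  proof (cases n)
    case 0 then show ?thesis using a b by (simp add: nt_expansion_def)
  next
    case (Suc m)
    then show ?thesis
      using trunc_eq[of "Suc m"] trunc_eq[of m] p by (simp add: expansion_trunc_Suc)
  qed
qed

lemma ceiling_scaled_digit_bounds:
  fixes p :: nat and \<alpha> :: real and c :: "nat \<Rightarrow> int"
  defines "c \<equiv> \<lambda>n. \<lceil>real p ^ n * \<alpha>\<rceil> - 1"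
  assumes "p > 0"
  shows "p * c n \<le> c (Suc n)" and "c (Suc n) \<le> p * c n + (int p - 1)"
proof -
  have c: "of_int (c n) < real p ^ n * \<alpha>" "real p ^ n * \<alpha> \<le> of_int (c n) + 1" for n
    using ceiling_correct[of "real p ^ n * \<alpha>"] unfolding c_def by simp_all
  have "real p * of_int (c n) < real p * (real p ^ n * \<alpha>)"
    using c(1)[of n] assms(2) by (intro mult_strict_left_mono) auto
  then have "of_int (int p * c n) < of_int (c (Suc n)) + (1::real)"
    using c(2)[of "Suc n"] by (simp add: mult.assoc)
  then show "p * c n \<le> c (Suc n)" by linarith
  have "real p * (real p ^ n * \<alpha>) \<le> real p * (of_int (c n) + 1)"
    using c(2)[of n] by (intro mult_left_mono) auto
  then have "of_int (c (Suc n)) < (of_int (int p * c n + int p) :: real)"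
    using c(1)[of "Suc n"] by (simp add: mult.assoc distrib_left)
  then show "c (Suc n) \<le> p * c n + (int p - 1)" by linarith
qed

text \<open>The digits are read off the integers \<open>\<lceil>p\<^sup>n \<alpha>\<rceil> - 1\<close>, which are \<open>p\<^sup>n\<close> times the truncations.\<close>

lemma nt_expansion_exists:
  assumes p: "p \<ge> 2" and "0 < \<alpha>" "\<alpha> \<le> 1"
  shows "\<exists>a. nt_expansion p \<alpha> a"
proof -
  define c :: "nat \<Rightarrow> int" where "c n = \<lceil>real p ^ n * \<alpha>\<rceil> - 1" for n
  have cb: "of_int (c n) < real p ^ n * \<alpha>" "real p ^ n * \<alpha> \<le> of_int (c n) + 1" for n
    using ceiling_correct[of "real p ^ n * \<alpha>"] unfolding c_def by simp_all
  have p0: "p > 0" using p by simp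
  note digit_lo = ceiling_scaled_digit_bounds(1)[where \<alpha>=\<alpha>, OF p0, folded c_def]
   and digit_hi = ceiling_scaled_digit_bounds(2)[where \<alpha>=\<alpha>, OF p0, folded c_def]
  define a where "a i = (if i = 0 then 0 else nat (c i - p * c (i - 1)))" for i
  have p1: "real p > 1" using p by simp
  have trunc_c: "expansion_trunc p a n = of_int (c n) / real p ^ n" for n
  proof (induction n)
    case 0 then show ?case using assms by (simp add: c_def expansion_trunc_def ceiling_eq_iff)
  next
    case (Suc n) then show ?case
      using digit_lo[of n] p by (simp add: expansion_trunc_Suc a_def field_simps)
  qed
  have "(\<lambda>n. of_int (c n) / real p ^ n) \<longlonglongrightarrow> \<alpha>"
  proof (rule tendsto_sandwich)
    show "(\<lambda>n. \<alpha> - inverse (real p ^ n)) \<longlonglongrightarrow> \<alpha>"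
      using tendsto_diff[OF tendsto_const LIMSEQ_inverse_realpow_zero[OF p1], of \<alpha>] by simp
    have "\<alpha> - inverse (real p ^ n) \<le> of_int (c n) / real p ^ n" for n
    proof -
      have "(real p ^ n * \<alpha> - 1) / real p ^ n \<le> of_int (c n) / real p ^ n"
        using cb(2)[of n] p1 by (intro divide_right_mono) auto
      then show ?thesis using p1 by (simp add: field_simps)
    qed
    then show "\<forall>\<^sub>F n in sequentially. \<alpha> - inverse (real p ^ n) \<le> of_int (c n) / real p ^ n"
      by simp
    show "\<forall>\<^sub>F n in sequentially. of_int (c n) / real p ^ n \<le> \<alpha>"
      using cb(1) p1 by (auto simp: field_simps less_imp_le)
  qed simp
  then have sums: "(\<lambda>i. real (a (Suc i)) / real p ^ Suc i) sums \<alpha>"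
    unfolding sums_def expansion_trunc_eq_partial_sum[symmetric] trunc_c .
  have "a i \<le> p - 1" for i
    using digit_lo[of "i - 1"] digit_hi[of "i - 1"] by (cases i) (use p in \<open>auto simp: a_def nat_le_iff\<close>)
  moreover have "\<not> (\<exists>N. \<forall>i\<ge>N. a i = 0)"
  proof
    assume "\<exists>N. \<forall>i\<ge>N. a i = 0"
    then obtain N where N: "\<forall>i\<ge>N. a i = 0" by blast
    have "(\<lambda>i. real (a (Suc (i + N))) / real p ^ Suc (i + N)) sums (\<alpha> - expansion_trunc p a N)"
      using sums_split_initial_segment[OF sums, of N] by (simp add: expansion_trunc_eq_partial_sum)
    then have "\<alpha> = expansion_trunc p a N" using N sums_zero sums_unique2 by fastforce
    then show False using trunc_c[of N] cb(1)[of N] p1 by (simp add: field_simps)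
  qed
  ultimately have "nt_expansion p \<alpha> a" using sums by (simp add: nt_expansion_def a_def)
  then show ?thesis by blast
qed

lemma nt_digits_nt_expansion:
  assumes "p \<ge> 2" "0 < \<alpha>" "\<alpha> \<le> 1"
  shows "nt_expansion p \<alpha> (nt_digits p \<alpha>)"
proof -
  have "\<exists>!a. nt_expansion p \<alpha> a"
    using nt_expansion_exists[OF assms] nt_expansion_unique[OF _ _ assms(1)] by blast
  from theI'[OF this] show ?thesis unfolding nt_digits_def nt_expansion_def .
qed

lemma floor_eq_iff_scaled_tail_ge:
  fixes q T \<alpha> :: real
  assumes "0 < \<alpha>" and "q * T = of_int k" and "q * (\<alpha> - T) \<le> 1"
  shows "of_int \<lfloor>(q - 1) * \<alpha>\<rfloor> = q * T \<longleftrightarrow> \<alpha> \<le> q * (\<alpha> - T)"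
proof -
  define y where "y = q * (\<alpha> - T) - \<alpha>"
  have "(q - 1) * \<alpha> = of_int k + y" using assms(2) by (simp add: y_def algebra_simps)
  then have "\<lfloor>(q - 1) * \<alpha>\<rfloor> = k + \<lfloor>y\<rfloor>" by simp
  then have "of_int \<lfloor>(q - 1) * \<alpha>\<rfloor> = q * T \<longleftrightarrow> \<lfloor>y\<rfloor> = 0" using assms(2) by simp
  also have "\<dots> \<longleftrightarrow> 0 \<le> y" using assms(1,3) by (simp add: y_def floor_eq_iff)
  finally show ?thesis by (simp add: y_def)
qed

theorem mainTheorem14:
  fixes p e :: nat and \<alpha> :: real
  assumes "prime p" and "0 \<le> \<alpha>" and "\<alpha> \<le> 1" and "e \<ge> 1"
  shows "(real_of_int \<lfloor>(real p ^ e - 1) * \<alpha>\<rfloor> = real p ^ e * trunc p \<alpha> e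
            \<longleftrightarrow> \<alpha> \<le> real p ^ e * tail p \<alpha> e)
       \<and> (\<alpha> \<le> real p ^ e * tail p \<alpha> e
            \<longleftrightarrow> \<alpha> \<ge> real p ^ e / (real p ^ e - 1) * trunc p \<alpha> e)"
proof (cases "\<alpha> = 0")
  case True then show ?thesis by (simp add: trunc_def tail_def)
next
  case False
  have p: "p \<ge> 2" using assms(1) by (simp add: prime_ge_2_nat)
  have \<alpha>: "0 < \<alpha>" using False assms(2) by simp
  define q where "q = real p ^ e"
  define T where "T = expansion_trunc p (nt_digits p \<alpha>) e"
  have trunc_tail: "trunc p \<alpha> e = T" "tail p \<alpha> e = \<alpha> - T"
    using False by (simp_all add: trunc_def tail_def T_def expansion_trunc_def)
  note digits = nt_digits_nt_expansion[OF p \<alpha> assms(3)]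
  have "q * T = of_int (\<lceil>q * \<alpha>\<rceil> - 1)"
    using nt_expansion_trunc_eq_ceiling[OF digits p] by (simp add: q_def T_def)
  moreover have "q * (\<alpha> - T) \<le> 1"
    using nt_expansion_tail_bounds(2)[OF digits p, of e] p by (simp add: q_def T_def field_simps)
  ultimately have "of_int \<lfloor>(q - 1) * \<alpha>\<rfloor> = q * T \<longleftrightarrow> \<alpha> \<le> q * (\<alpha> - T)"
    by (rule floor_eq_iff_scaled_tail_ge[OF \<alpha>])
  moreover have "q > 1"
    unfolding q_def using p assms(4) by (simp add: one_less_power)
  then have "\<alpha> \<le> q * (\<alpha> - T) \<longleftrightarrow> q / (q - 1) * T \<le> \<alpha>" by (simp add: field_simps)
  ultimately show ?thesis unfolding trunc_tail q_def by simp
qed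

end
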